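(* Let $t\ge0$, let $R^*>1$ be such that for every $R\in(1,R^*]$ the function $\eta=\eta_R$ (defined in the context) satisfies $\eta(r)\ge\frac23$ on $[1,R]$, and let $1<R\le R^*$. Let $h$ be a minimizer of $E$ over $\mathcal A_h$. Then \[ \frac23\le\eta(r)\le h(r)\le 1\qquad\text{for }1\le r\le R. \]
   Context: $\eta_R(r)=\frac{1}{R^5-1}\left[(R^3-1)r^2+(R^2-1)\left(\frac{R}{r}\right)^3\right]$ for $r\in[1,R]$. For $t\ge0$ put $h_+=\frac{3+\sqrt{9+8t}}{4}$ and \[ E[h]=\int_1^R \frac{r^2}{2}(h')^2+3h^2+r^2\left[\frac t8(1-h^2)^2+\frac{h_+}{8}(1+3h^4-4h^3)\right]dr, \] $\mathcal A_h=\{h\in L^2(1,R): h'\in L^2((1,R);r^2dr),\ h(1)=h(R)=1\}$. A minimizer $h$ solves $h''+\frac2rh'-\frac6{r^2}h=hf(h)$ with $f(h)=\frac t2(h^2-1)+\frac{3h_+}{2}(h^2-h)$. *)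

theory Defs
  imports "HOL-Analysis.Analysis"
begin

definition eta :: "real \<Rightarrow> real \<Rightarrow> real" where
  "eta R r = 1 / (R^5 - 1) * ((R^3 - 1) * r^2 + (R^2 - 1) * (R / r)^3)"

definition hplus :: "real \<Rightarrow> real" where
  "hplus t = (3 + sqrt (9 + 8 * t)) / 4"

text \<open>Energy of h, where g is (a representative of) the derivative h'.\<close>
definition energy :: "real \<Rightarrow> real \<Rightarrow> (real \<Rightarrow> real) \<Rightarrow> (real \<Rightarrow> real) \<Rightarrow> real" where
  "energy t R h g = (LINT r:{1..R}|lborel.
      r^2 / 2 * (g r)^2 + 3 * (h r)^2
      + r^2 * (t / 8 * (1 - (h r)^2)^2 + hplus t / 8 * (1 + 3 * (h r)^4 - 4 * (h r)^3)))"

text \<open>(h, g) describes an element of the admissible class A_h: h (its continuous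
  representative) is the indefinite integral of g on [1,R], h is in L^2(1,R),
  g = h' is in L^2((1,R); r^2 dr), and h(1) = h(R) = 1.\<close>
definition admissible :: "real \<Rightarrow> (real \<Rightarrow> real) \<Rightarrow> (real \<Rightarrow> real) \<Rightarrow> bool" where
  "admissible R h g \<longleftrightarrow>
     set_integrable lborel {1..R} g \<and>
     (\<forall>x\<in>{1..R}. h x = h 1 + (LINT r:{1..x}|lborel. g r)) \<and>
     set_integrable lborel {1..R} (\<lambda>r. (h r)^2) \<and>
     set_integrable lborel {1..R} (\<lambda>r. r^2 * (g r)^2) \<and>
     h 1 = 1 \<and> h R = 1"

definition is_minimizer :: "real \<Rightarrow> real \<Rightarrow> (real \<Rightarrow> real) \<Rightarrow> bool" where
  "is_minimizer t R h \<longleftrightarrow>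
     (\<exists>g. admissible R h g \<and>
        (\<forall>k gk. admissible R k gk \<longrightarrow> energy t R h g \<le> energy t R k gk))"

end

theory Submission
  imports Defs
begin

text \<open>
  Each of the bounds 0 \<le> h, h \<le> 1 and \<eta> \<le> h is proved by contradiction. If it fails, there is
  an interval (a, b) on which it fails strictly while equality holds at a and b, and on [a, b]
  h is replaced by a competitor with the same boundary values: -h, the constant 1, or \<eta>. By
  minimality of h the energy on [a, b] cannot decrease. For -h it does, since the potential
  W = potential t satisfies W(-x) < W(x) for x < 0; for 1 it does since 3 h^2 > 3 where h > 1. For
  \<eta> the key fact is that \<eta> solves the linear part of the Euler-Lagrange equation,
  (r^2 \<eta>')' = 6 \<eta>, so that by convexity and integration by parts the quadratic part of the
  energy does not increase, while W is strictly decreasing on [0, 1] and 0 \<le> h < \<eta> \<le> 1.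
\<close>


lemma set_integrable_patch:
  fixes u v :: "real \<Rightarrow> real"
  assumes u: "set_integrable lborel {lo..hi} u" and v: "set_integrable lborel {a..b} v"
    and "lo \<le> a" "b \<le> hi"
  shows "set_integrable lborel {lo..hi} (\<lambda>x. if x \<in> {a<..<b} then v x else u x)"
proof -
  have "set_integrable lborel ({lo..hi} - {a<..<b}) u" "set_integrable lborel {a<..<b} v"
    by (auto intro: set_integrable_subset[OF u] set_integrable_subset[OF v])
  then have "integrable lborel
      (\<lambda>x. indicator {a<..<b} x *\<^sub>R v x + indicator ({lo..hi} - {a<..<b}) x *\<^sub>R u x)"
    unfolding set_integrable_def by (rule Bochner_Integration.integrable_add[rotated])
  moreover have "(\<lambda>x. indicator {a<..<b} x *\<^sub>R v x + indicator ({lo..hi} - {a<..<b}) x *\<^sub>R u x)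
      = (\<lambda>x. indicator {lo..hi} x *\<^sub>R (if x \<in> {a<..<b} then v x else u x))"
    using assms(3,4) by (auto simp: indicator_def fun_eq_iff)
  ultimately show ?thesis
    unfolding set_integrable_def by simp
qed

lemma set_integrable_mult_continuous_on:
  fixes g c :: "real \<Rightarrow> real"
  assumes g: "set_integrable lborel {a..b} g" and c: "continuous_on {a..b} c"
  shows "set_integrable lborel {a..b} (\<lambda>x. g x * c x)"
proof -
  obtain M where M: "\<And>x. x \<in> {a..b} \<Longrightarrow> \<bar>c x\<bar> \<le> M"
    using compact_continuous_image[OF c compact_Icc] by (force dest: compact_imp_bounded simp: bounded_iff)
  show ?thesis
  proof (rule set_integrable_bound[where f = "\<lambda>x. M * g x"])
    show "set_integrable lborel {a..b} (\<lambda>x. M * g x)"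
      using g by simp
    have "(\<lambda>x. indicator {a..b} x *\<^sub>R g x) \<in> borel_measurable lborel"
      using g unfolding set_integrable_def by (rule borel_measurable_integrable)
    moreover have "(\<lambda>x. indicator {a..b} x *\<^sub>R c x) \<in> borel_measurable lborel"
      using borel_measurable_continuous_on_indicator[OF _ c] by simp
    ultimately have "(\<lambda>x. (indicator {a..b} x *\<^sub>R g x) * (indicator {a..b} x *\<^sub>R c x))
        \<in> borel_measurable lborel"
      by (rule borel_measurable_times)
    moreover have "(\<lambda>x. (indicator {a..b} x *\<^sub>R g x) * (indicator {a..b} x *\<^sub>R c x)) =
        (\<lambda>x. indicator {a..b} x *\<^sub>R (g x * c x))"
      by (auto simp: indicator_def)
    ultimately show "set_borel_measurable lborel {a..b} (\<lambda>x. g x * c x)"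
      unfolding set_borel_measurable_def by simp
    show "AE x in lborel. x \<in> {a..b} \<longrightarrow> norm (g x * c x) \<le> norm (M * g x)"
    proof (rule AE_I2, rule impI)
      fix x assume "x \<in> {a..b}"
      then have "\<bar>c x\<bar> * \<bar>g x\<bar> \<le> \<bar>M\<bar> * \<bar>g x\<bar>"
        using M[of x] by (intro mult_right_mono) auto
      then show "norm (g x * c x) \<le> norm (M * g x)"
        by (simp add: abs_mult mult.commute)
    qed
  qed
qed

lemma integrable_lborel_pair_mult:
  fixes f g :: "real \<Rightarrow> real"
  assumes g: "integrable lborel g" and f: "integrable lborel f"
  shows "integrable (lborel \<Otimes>\<^sub>M lborel) (\<lambda>(r, s). g r * f s)"
proof (rule lborel_pair.Fubini_integrable)
  have [measurable]: "g \<in> borel_measurable lborel" "f \<in> borel_measurable lborel"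
    using f g by auto
  show "(\<lambda>(r, s). g r * f s) \<in> borel_measurable (lborel \<Otimes>\<^sub>M lborel)"
    by measurable
  show "integrable lborel (\<lambda>r. \<integral>s. norm (case (r, s) of (r, s) \<Rightarrow> g r * f s) \<partial>lborel)"
    using g f by (simp add: abs_mult)
  show "AE r in lborel. integrable lborel (\<lambda>s. case (r, s) of (r, s) \<Rightarrow> g r * f s)"
    using f by simp
qed

lemma set_integral_triangle_swap:
  fixes f g :: "real \<Rightarrow> real"
  assumes f: "continuous_on {a..b} f" and g: "set_integrable lborel {a..b} g"
  shows "(LBINT s:{a..b}. f s * (LBINT r:{a..s}. g r)) = (LBINT r:{a..b}. g r * (LBINT s:{r..b}. f s))"
proof -
  define fb where "fb s = indicator {a..b} s * f s" for s
  define gb where "gb r = indicator {a..b} r * g r" for r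
  have "integrable lborel fb" "integrable lborel gb"
    using borel_integrable_atLeastAtMost'[OF f] g unfolding set_integrable_def fb_def gb_def by simp_all
  note [measurable] = borel_measurable_integrable[OF this(1)] borel_measurable_integrable[OF this(2)]
  define \<phi> where "\<phi> r s = of_bool (r \<le> s) * gb r * fb s" for r s :: real
  have "integrable (lborel \<Otimes>\<^sub>M lborel) (case_prod \<phi>)"
  proof (rule Bochner_Integration.integrable_bound)
    show "integrable (lborel \<Otimes>\<^sub>M lborel) (\<lambda>(r, s). gb r * fb s)"
      by (rule integrable_lborel_pair_mult) fact+
    show "case_prod \<phi> \<in> borel_measurable (lborel \<Otimes>\<^sub>M lborel)"
      unfolding \<phi>_def by measurable
  qed (auto simp: \<phi>_def abs_mult)
  then have "(\<integral>s. (\<integral>r. \<phi> r s \<partial>lborel) \<partial>lborel) = (\<integral>r. (\<integral>s. \<phi> r s \<partial>lborel) \<partial>lborel)"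
    by (rule lborel_pair.Fubini_integral)
  moreover have "(\<integral>r. \<phi> r s \<partial>lborel) = indicator {a..b} s * (f s * (LBINT r:{a..s}. g r))" for s
  proof -
    have "\<phi> r s = indicator {a..b} s * (indicator {a..s} r * g r * f s)" for r
      by (auto simp: \<phi>_def gb_def fb_def indicator_def)
    then show ?thesis
      unfolding set_lebesgue_integral_def by (simp add: mult.commute)
  qed
  moreover have "(\<integral>s. \<phi> r s \<partial>lborel) = indicator {a..b} r * (g r * (LBINT s:{r..b}. f s))" for r
  proof -
    have "\<phi> r s = indicator {a..b} r * (g r * (indicator {r..b} s * f s))" for s
      by (auto simp: \<phi>_def gb_def fb_def indicator_def)
    then show ?thesis
      unfolding set_lebesgue_integral_def by simp
  qed
  ultimately show ?thesis
    unfolding set_lebesgue_integral_def by simp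
qed

section \<open>Functions with square integrable weighted derivative\<close>

text \<open>
  The admissible class without its boundary conditions: p is the continuous representative
  and q plays the role of p'.
\<close>

definition weighted_H1_on :: "real \<Rightarrow> real \<Rightarrow> (real \<Rightarrow> real) \<Rightarrow> (real \<Rightarrow> real) \<Rightarrow> bool" where
  "weighted_H1_on a b p q \<longleftrightarrow>
     set_integrable lborel {a..b} q \<and> (\<forall>x\<in>{a..b}. p x = p a + integral {a..x} q) \<and>
     set_integrable lborel {a..b} (\<lambda>r. (p r)^2) \<and> set_integrable lborel {a..b} (\<lambda>r. r^2 * (q r)^2)"

lemma weighted_H1_onD:
  assumes "weighted_H1_on a b p q"
  shows "set_integrable lborel {a..b} q" "\<And>x. x \<in> {a..b} \<Longrightarrow> p x = p a + integral {a..x} q"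
    "set_integrable lborel {a..b} (\<lambda>r. (p r)^2)" "set_integrable lborel {a..b} (\<lambda>r. r^2 * (q r)^2)"
  using assms unfolding weighted_H1_on_def by blast+

lemma admissible_iff_weighted_H1_on:
  "admissible R h g \<longleftrightarrow> weighted_H1_on 1 R h g \<and> h 1 = 1 \<and> h R = 1"
proof -
  have "(LINT r:{1..x}|lborel. g r) = integral {1..x} g"
    if "set_integrable lborel {1..R} g" "x \<in> {1..R}" for x
    using that by (intro set_borel_integral_eq_integral(2) set_integrable_subset[OF that(1)]) auto
  then have "(\<forall>x\<in>{1..R}. h x = h 1 + (LINT r:{1..x}|lborel. g r)) \<longleftrightarrow>
      (\<forall>x\<in>{1..R}. h x = h 1 + integral {1..x} g)" if "set_integrable lborel {1..R} g"
    using that by (intro ball_cong) auto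
  then show ?thesis
    unfolding admissible_def weighted_H1_on_def by blast
qed

lemma weighted_H1_on_integrable_on: "weighted_H1_on a b p q \<Longrightarrow> q integrable_on {a..b}"
  by (rule set_borel_integral_eq_integral(1)[OF weighted_H1_onD(1)])

lemma weighted_H1_on_continuous_on:
  assumes "weighted_H1_on a b p q" shows "continuous_on {a..b} p"
proof -
  have "continuous_on {a..b} (\<lambda>x. p a + integral {a..x} q)"
    by (intro continuous_intros indefinite_integral_continuous_1 weighted_H1_on_integrable_on[OF assms])
  then show ?thesis
    by (rule continuous_on_eq) (rule weighted_H1_onD(2)[OF assms, symmetric])
qed

lemma weighted_H1_on_integral_from:
  assumes "weighted_H1_on a b p q" "a \<le> c" "c \<le> x" "x \<le> b"
  shows "p x = p c + integral {c..x} q"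
proof -
  have "q integrable_on {a..x}"
    by (rule integrable_subinterval_real[OF weighted_H1_on_integrable_on[OF assms(1)]]) (use assms in auto)
  then have "integral {a..c} q + integral {c..x} q = integral {a..x} q"
    by (rule Henstock_Kurzweil_Integration.integral_combine[OF assms(2,3)])
  moreover have "p x = p a + integral {a..x} q" "p c = p a + integral {a..c} q"
    using assms by (auto intro!: weighted_H1_onD(2)[OF assms(1)])
  ultimately show ?thesis by linarith
qed

lemma weighted_H1_on_subinterval:
  assumes "weighted_H1_on a b p q" "a \<le> c" "d \<le> b"
  shows "weighted_H1_on c d p q"
  unfolding weighted_H1_on_def
proof (intro conjI ballI)
  show "p x = p c + integral {c..x} q" if "x \<in> {c..d}" for x
    by (rule weighted_H1_on_integral_from[OF assms(1)]) (use assms that in auto)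
qed (use assms weighted_H1_onD(1,3,4)[OF assms(1)] in \<open>auto elim!: set_integrable_subset\<close>)

lemma weighted_H1_on_uminus:
  assumes "weighted_H1_on a b p q"
  shows "weighted_H1_on a b (\<lambda>x. - p x) (\<lambda>x. - q x)"
  unfolding weighted_H1_on_def
proof (intro conjI ballI)
  show "set_integrable lborel {a..b} (\<lambda>x. - q x)"
    using set_integrable_mult_right[of "-1", OF weighted_H1_onD(1)[OF assms]] by simp
  show "- p x = - p a + integral {a..x} (\<lambda>x. - q x)" if "x \<in> {a..b}" for x
    using weighted_H1_onD(2)[OF assms that] by (simp add: integral_neg)
qed (use weighted_H1_onD(3,4)[OF assms] in auto)

lemma weighted_H1_on_C1:
  assumes "continuous_on {a..b} q"
    and "\<And>x. x \<in> {a..b} \<Longrightarrow> (p has_real_derivative q x) (at x within {a..b})"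
  shows "weighted_H1_on a b p q"
  unfolding weighted_H1_on_def
proof (intro conjI ballI)
  fix x assume x: "x \<in> {a..b}"
  have "(q has_integral (p x - p a)) {a..x}"
  proof (rule fundamental_theorem_of_calculus)
    fix y assume "y \<in> {a..x}"
    then have "(p has_real_derivative q y) (at y within {a..x})"
      using x by (intro has_field_derivative_subset[OF assms(2)]) auto
    then show "(p has_vector_derivative q y) (at y within {a..x})"
      by (simp add: has_real_derivative_iff_has_vector_derivative)
  qed (use x in auto)
  then show "p x = p a + integral {a..x} q"
    by (simp add: integral_unique)
next
  have "continuous_on {a..b} p"
    using assms(2) by (metis DERIV_continuous continuous_on_eq_continuous_within)
  then show "set_integrable lborel {a..b} (\<lambda>r. (p r)^2)"
    by (intro borel_integrable_atLeastAtMost' continuous_intros)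
qed (use assms(1) in \<open>auto intro!: borel_integrable_atLeastAtMost' continuous_intros\<close>)

lemma patch_eq_indefinite_integral:
  assumes h: "weighted_H1_on lo hi h g" and p: "weighted_H1_on a b p q"
    and ab: "lo \<le> a" "a < b" "b \<le> hi" and ends: "p a = h a" "p b = h b"
    and x: "x \<in> {lo..hi}"
  shows "(if x \<in> {a<..<b} then p x else h x)
    = h lo + integral {lo..x} (\<lambda>x. if x \<in> {a<..<b} then q x else g x)"
    (is "_ = _ + integral _ ?gk")
proof -
  have "set_integrable lborel {lo..hi} ?gk"
    using ab by (intro set_integrable_patch weighted_H1_onD(1)[OF h] weighted_H1_onD(1)[OF p])
  then have gk: "?gk integrable_on {c..d}" if "lo \<le> c" "d \<le> hi" for c d
    by (rule integrable_subinterval_real[OF set_borel_integral_eq_integral(1)]) (use that in auto)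
  have left: "integral {lo..y} ?gk = h y - h lo" if "lo \<le> y" "y \<le> a" for y
    using that ab integral_cong[of "{lo..y}" ?gk g] weighted_H1_on_integral_from[OF h, of lo y] by auto
  have middle: "integral {lo..y} ?gk = p y - h lo" if "a \<le> y" "y \<le> b" for y
  proof -
    have "integral {lo..y} ?gk = integral {lo..a} ?gk + integral {a..y} ?gk"
      using that ab by (intro Henstock_Kurzweil_Integration.integral_combine[symmetric] gk) auto
    also have "integral {a..y} ?gk = integral {a..y} q"
      by (rule integral_spike[of "{a, b}"]) (use that in auto)
    also have "integral {a..y} q = p y - p a"
      using weighted_H1_on_integral_from[OF p, of a y] that by simp
    finally show ?thesis
      using left[of a] ab ends by simp
  qed
  consider "x \<le> a" | "a \<le> x" "x \<le> b" | "b < x"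
    by linarith
  then show ?thesis
  proof cases
    case 1
    then show ?thesis using left[of x] x ab by auto
  next
    case 2
    then show ?thesis using middle[of x] ab ends by auto
  next
    case 3
    have "integral {lo..x} ?gk = integral {lo..b} ?gk + integral {b..x} ?gk"
      using 3 x ab by (intro Henstock_Kurzweil_Integration.integral_combine[symmetric] gk) auto
    also have "integral {b..x} ?gk = integral {b..x} g"
      by (rule integral_cong) auto
    also have "integral {b..x} g = h x - h b"
      using weighted_H1_on_integral_from[OF h, of b x] 3 x ab by simp
    finally show ?thesis
      using middle[of b] 3 ab ends by auto
  qed
qed

lemma weighted_H1_on_patch:
  assumes h: "weighted_H1_on lo hi h g" and p: "weighted_H1_on a b p q"
    and ab: "lo \<le> a" "a < b" "b \<le> hi" and ends: "p a = h a" "p b = h b"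
  shows "weighted_H1_on lo hi (\<lambda>x. if x \<in> {a<..<b} then p x else h x)
           (\<lambda>x. if x \<in> {a<..<b} then q x else g x)"
    (is "weighted_H1_on lo hi ?k ?gk")
proof -
  note hD = weighted_H1_onD[OF h] and pD = weighted_H1_onD[OF p]
  have square: "(\<lambda>r. (?k r)^2) = (\<lambda>x. if x \<in> {a<..<b} then (p x)^2 else (h x)^2)"
    and weighted_square: "(\<lambda>r. r^2 * (?gk r)^2) =
      (\<lambda>x. if x \<in> {a<..<b} then x^2 * (q x)^2 else x^2 * (g x)^2)"
    by auto
  have "set_integrable lborel {lo..hi} ?gk"
    by (rule set_integrable_patch[OF hD(1) pD(1)]) (use ab in auto)
  moreover have "set_integrable lborel {lo..hi}
      (\<lambda>x. if x \<in> {a<..<b} then (p x)^2 else (h x)^2)"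
    by (rule set_integrable_patch[OF hD(3) pD(3)]) (use ab in auto)
  moreover have "set_integrable lborel {lo..hi}
      (\<lambda>x. if x \<in> {a<..<b} then x^2 * (q x)^2 else x^2 * (g x)^2)"
    by (rule set_integrable_patch[OF hD(4) pD(4)]) (use ab in auto)
  moreover have "?k x = ?k lo + integral {lo..x} ?gk" if "x \<in> {lo..hi}" for x
    using patch_eq_indefinite_integral[OF h p ab ends that] ab by simp
  ultimately show ?thesis
    unfolding weighted_H1_on_def square weighted_square by blast
qed

lemma weighted_H1_on_integral_swap:
  assumes H: "weighted_H1_on a b H g" and F: "weighted_H1_on a b F f" and f: "continuous_on {a..b} f"
  shows "integral {a..b} (\<lambda>s. f s * (H s - H a)) = integral {a..b} (\<lambda>r. g r * (F b - F r))"
proof -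
  note g = weighted_H1_onD(1)[OF H]
  have "(LBINT s:{a..b}. f s * (LBINT r:{a..s}. g r)) = (LBINT s:{a..b}. f s * (H s - H a))"
  proof (rule set_lebesgue_integral_cong, simp, intro allI impI)
    fix s assume s: "s \<in> {a..b}"
    then have "(LBINT r:{a..s}. g r) = integral {a..s} g"
      by (intro set_borel_integral_eq_integral(2) set_integrable_subset[OF g]) auto
    then show "f s * (LBINT r:{a..s}. g r) = f s * (H s - H a)"
      using weighted_H1_onD(2)[OF H s] by simp
  qed
  moreover have "(LBINT r:{a..b}. g r * (LBINT s:{r..b}. f s)) = (LBINT r:{a..b}. g r * (F b - F r))"
  proof (rule set_lebesgue_integral_cong, simp, intro allI impI)
    fix r assume r: "r \<in> {a..b}"
    then have "(LBINT s:{r..b}. f s) = integral {r..b} f"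
      by (intro set_borel_integral_eq_integral(2) set_integrable_subset[OF weighted_H1_onD(1)[OF F]])
        auto
    then show "g r * (LBINT s:{r..b}. f s) = g r * (F b - F r)"
      using weighted_H1_on_integral_from[OF F, of r b] r by simp
  qed
  moreover have "set_integrable lborel {a..b} (\<lambda>s. f s * (H s - H a))"
    by (intro borel_integrable_atLeastAtMost' continuous_intros f weighted_H1_on_continuous_on[OF H])
  moreover have "set_integrable lborel {a..b} (\<lambda>r. g r * (F b - F r))"
    by (intro set_integrable_mult_continuous_on g continuous_intros weighted_H1_on_continuous_on[OF F])
  ultimately show ?thesis
    using set_integral_triangle_swap[OF f g] by (simp add: set_borel_integral_eq_integral(2))
qed

lemma weighted_H1_on_integration_by_parts:
  assumes H: "weighted_H1_on a b H g" and ab: "a \<le> b" and f: "continuous_on {a..b} f"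
    and F: "\<And>x. x \<in> {a..b} \<Longrightarrow> (F has_real_derivative f x) (at x within {a..b})"
  shows "((\<lambda>r. F r * g r + f r * H r) has_integral F b * H b - F a * H a) {a..b}"
proof -
  have FH1: "weighted_H1_on a b F f"
    by (rule weighted_H1_on_C1[OF f F])
  have fH: "(\<lambda>s. f s * H s) integrable_on {a..b}"
    by (intro integrable_continuous_interval continuous_intros f weighted_H1_on_continuous_on[OF H])
  have gF: "(\<lambda>r. g r * F r) integrable_on {a..b}"
    by (intro set_borel_integral_eq_integral(1) set_integrable_mult_continuous_on
        weighted_H1_onD(1)[OF H] weighted_H1_on_continuous_on[OF FH1])
  have "integral {a..b} (\<lambda>s. f s * (H s - H a)) = integral {a..b} (\<lambda>s. f s * H s) - H a * (F b - F a)"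
    using fH integrable_on_mult_right[OF weighted_H1_on_integrable_on[OF FH1], of "H a"]
      weighted_H1_onD(2)[OF FH1, of b] ab
    by (simp add: right_diff_distrib integral_diff mult.commute)
  moreover have "integral {a..b} (\<lambda>r. g r * (F b - F r)) = F b * (H b - H a) - integral {a..b} (\<lambda>r. g r * F r)"
    using gF integrable_on_mult_right[OF weighted_H1_on_integrable_on[OF H], of "F b"]
      weighted_H1_onD(2)[OF H, of b] ab
    by (simp add: right_diff_distrib integral_diff mult.commute)
  ultimately have "integral {a..b} (\<lambda>r. g r * F r) + integral {a..b} (\<lambda>s. f s * H s)
      = F b * (H b - H a) + H a * (F b - F a)"
    using weighted_H1_on_integral_swap[OF H FH1 f] by linarith
  also have "\<dots> = F b * H b - F a * H a"
    by (simp add: algebra_simps)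
  finally show ?thesis
    using has_integral_add[OF integrable_integral[OF gF] integrable_integral[OF fH]]
    by (simp add: mult.commute)
qed


section \<open>The energy density\<close>

definition potential :: "real \<Rightarrow> real \<Rightarrow> real" where
  "potential t x = t / 8 * (1 - x^2)^2 + hplus t / 8 * (1 + 3 * x^4 - 4 * x^3)"

definition lagrangian :: "real \<Rightarrow> (real \<Rightarrow> real) \<Rightarrow> (real \<Rightarrow> real) \<Rightarrow> real \<Rightarrow> real" where
  "lagrangian t h g r = r^2 / 2 * (g r)^2 + 3 * (h r)^2 + r^2 * potential t (h r)"

lemma hplus_ge: "0 \<le> t \<Longrightarrow> 3/2 \<le> hplus t"
  unfolding hplus_def by (simp add: real_le_rsqrt)

lemma potential_nonneg:
  assumes "0 \<le> t" shows "0 \<le> potential t x"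
proof -
  have "1 + 3 * x^4 - 4 * x^3 = (x - 1)^2 * (2 * x^2 + (x + 1)^2)"
    by (simp add: algebra_simps eval_nat_numeral)
  then have "0 \<le> 1 + 3 * x^4 - 4 * x^3" by simp
  then show ?thesis unfolding potential_def using assms hplus_ge[OF assms] by simp
qed

lemma potential_one [simp]: "potential t 1 = 0"
  unfolding potential_def by simp

lemma potential_uminus: "potential t (- x) = potential t x + hplus t * x^3"
  unfolding potential_def by (simp add: algebra_simps)

lemma potential_strict_antimono:
  assumes "0 \<le> t" "0 \<le> y" "y < x" "x \<le> 1"
  shows "potential t x < potential t y"
proof -
  have "(1 - x^2)^2 \<le> (1 - y^2)^2"
    using assms by (intro power_mono) (auto simp: power_le_one power_mono)
  moreover have "x^3 * (3 * x - 4) < y^3 * (3 * y - 4)"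
  proof -
    define Q where "Q = 3 * (x*x*x + x*x*y + x*y*y + y*y*y) - 4 * (x*x + x*y + y*y)"
    have "x*x*x + x*x*y + x*y*y + y*y*y \<le> x*x + x*y + 2*y*y"
      using assms by (smt (verit) mult.commute mult_left_le_one_le mult_mono' ring_class.ring_distribs(1))
    moreover have "0 < (x - y) * (x + 2 * y)"
      using assms by simp
    ultimately have "Q < 0"
      unfolding Q_def by (simp add: algebra_simps)
    moreover have "x^3 * (3 * x - 4) - y^3 * (3 * y - 4) = (x - y) * Q"
      unfolding Q_def by (simp add: algebra_simps eval_nat_numeral)
    moreover have "(x - y) * Q < 0"
      using \<open>Q < 0\<close> assms by (simp add: mult_pos_neg)
    ultimately show ?thesis by linarith
  qed
  moreover have "potential t x - potential t y =
      t / 8 * ((1 - x^2)^2 - (1 - y^2)^2) + hplus t / 8 * (x^3 * (3 * x - 4) - y^3 * (3 * y - 4))"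
    unfolding potential_def by (simp add: algebra_simps eval_nat_numeral)
  moreover have "t / 8 * ((1 - x^2)^2 - (1 - y^2)^2) \<le> 0"
    using \<open>(1 - x^2)^2 \<le> (1 - y^2)^2\<close> assms(1) by (simp add: mult_nonneg_nonpos)
  moreover have "hplus t / 8 * (x^3 * (3 * x - 4) - y^3 * (3 * y - 4)) < 0"
    using \<open>x^3 * (3 * x - 4) < y^3 * (3 * y - 4)\<close> hplus_ge[OF assms(1)] by (simp add: mult_pos_neg)
  ultimately show ?thesis by linarith
qed

lemma lagrangian_le_tangent:
  "lagrangian t p q x \<le> lagrangian t h g x
     + (x^2 * q x * (q x - g x) + 6 * p x * (p x - h x))
     + x^2 * (potential t (p x) - potential t (h x))"
proof -
  have "lagrangian t h g x + (x^2 * q x * (q x - g x) + 6 * p x * (p x - h x))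
      + x^2 * (potential t (p x) - potential t (h x)) - lagrangian t p q x
      = x^2 / 2 * (q x - g x)^2 + 3 * (p x - h x)^2"
    unfolding lagrangian_def by (simp add: algebra_simps power2_eq_square)
  moreover have "0 \<le> x^2 / 2 * (q x - g x)^2 + 3 * (p x - h x)^2"
    by simp
  ultimately show ?thesis
    by linarith
qed

lemma set_integrable_lagrangian:
  assumes "weighted_H1_on a b p q"
  shows "set_integrable lborel {a..b} (lagrangian t p q)"
proof -
  have "set_integrable lborel {a..b} (\<lambda>r. potential t (p r) * r^2)"
    unfolding potential_def
    by (intro borel_integrable_atLeastAtMost' continuous_intros weighted_H1_on_continuous_on[OF assms])
  then have "set_integrable lborel {a..b}
      (\<lambda>r. 1/2 * (r^2 * (q r)^2) + 3 * (p r)^2 + potential t (p r) * r^2)"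
    using weighted_H1_onD(3,4)[OF assms] by (intro set_integral_add) auto
  then show ?thesis
    unfolding lagrangian_def by (simp add: field_simps)
qed

lemma energy_eq_integral_lagrangian:
  assumes "admissible R h g"
  shows "energy t R h g = integral {1..R} (lagrangian t h g)"
proof -
  have "energy t R h g = (LINT r:{1..R}|lborel. lagrangian t h g r)"
    unfolding energy_def lagrangian_def potential_def ..
  also have "\<dots> = integral {1..R} (lagrangian t h g)"
    using assms unfolding admissible_iff_weighted_H1_on
    by (intro set_borel_integral_eq_integral(2) set_integrable_lagrangian) blast
  finally show ?thesis .
qed


section \<open>Excursions of continuous functions\<close>

lemma last_zero_before_negative:
  fixes \<phi> :: "real \<Rightarrow> real"
  assumes "continuous_on {lo..r} \<phi>" "lo \<le> r" "0 \<le> \<phi> lo" "\<phi> r < 0"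
  obtains a where "lo \<le> a" "a < r" "\<phi> a = 0" "\<And>x. x \<in> {a<..r} \<Longrightarrow> \<phi> x < 0"
proof -
  define S where "S = {lo..r} \<inter> \<phi> -` {0..}"
  have "closed S"
    unfolding S_def by (rule continuous_closed_preimage[OF assms(1)]) auto
  moreover have "lo \<in> S" "bdd_above S"
    using assms by (auto simp: S_def intro: bdd_aboveI[of _ r])
  ultimately have a: "Sup S \<in> S" and upper: "\<And>x. x \<in> S \<Longrightarrow> x \<le> Sup S"
    by (auto intro: closed_contains_Sup cSup_upper)
  then have "lo \<le> Sup S" "Sup S < r" "0 \<le> \<phi> (Sup S)"
    using assms(4) by (auto simp: S_def less_le)
  moreover have neg: "\<phi> x < 0" if "x \<in> {Sup S<..r}" for x
    using upper[of x] that \<open>lo \<le> Sup S\<close> by (force simp: S_def)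
  moreover have "\<phi> (Sup S) = 0"
  proof (rule ccontr)
    assume nonzero: "\<phi> (Sup S) \<noteq> 0"
    have "continuous_on {Sup S..r} \<phi>"
      by (rule continuous_on_subset[OF assms(1)]) (use \<open>lo \<le> Sup S\<close> in auto)
    then obtain x where "Sup S \<le> x" "x \<le> r" "\<phi> x = 0"
      using IVT2'[of \<phi> r 0 "Sup S"] assms(4) \<open>Sup S < r\<close> \<open>0 \<le> \<phi> (Sup S)\<close> by auto
    moreover from this have "x \<in> S"
      using \<open>lo \<le> Sup S\<close> by (auto simp: S_def)
    ultimately show False
      using upper[of x] nonzero by force
  qed
  ultimately show thesis
    using that[of "Sup S"] by force
qed

lemma negative_excursion:
  fixes \<phi> :: "real \<Rightarrow> real"
  assumes cont: "continuous_on {lo..hi} \<phi>" and ends: "0 \<le> \<phi> lo" "0 \<le> \<phi> hi"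
    and r: "r \<in> {lo..hi}" "\<phi> r < 0"
  obtains a b where "lo \<le> a" "a < b" "b \<le> hi" "\<phi> a = 0" "\<phi> b = 0"
    "\<And>x. x \<in> {a<..<b} \<Longrightarrow> \<phi> x < 0"
proof -
  have "continuous_on {lo..r} \<phi>"
    by (rule continuous_on_subset[OF cont]) (use r in auto)
  then obtain a where a: "lo \<le> a" "a < r" "\<phi> a = 0" "\<And>x. x \<in> {a<..r} \<Longrightarrow> \<phi> x < 0"
    using last_zero_before_negative[of lo r \<phi>] ends r by auto
  have "continuous_on {-hi..-r} (\<lambda>x. \<phi> (- x))"
    by (intro continuous_on_compose2[OF cont] continuous_intros) (use r in auto)
  then obtain b' where b': "-hi \<le> b'" "b' < -r" "\<phi> (- b') = 0" "\<And>x. x \<in> {b'<..-r} \<Longrightarrow> \<phi> (- x) < 0"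
    using last_zero_before_negative[of "-hi" "-r" "\<lambda>x. \<phi> (- x)"] ends r by auto
  show thesis
  proof (rule that[of a "- b'"])
    fix x assume "x \<in> {a<..<- b'}"
    then show "\<phi> x < 0"
      using a(4)[of x] b'(4)[of "- x"] by (cases "x \<le> r") auto
  qed (use a b' in auto)
qed

section \<open>The comparison function \<eta>\<close>

definition eta' :: "real \<Rightarrow> real \<Rightarrow> real" where
  "eta' R r = 1 / (R^5 - 1) * (2 * (R^3 - 1) * r - 3 * (R^2 - 1) * R^3 / r^4)"

lemma eta_has_real_derivative:
  assumes "0 < r"
  shows "(eta R has_real_derivative eta' R r) (at r)"
proof -
  have "inverse (r^3) * (3 * r^2) * inverse (r^3) = 3 / r^4"
    using assms by (simp add: field_simps eval_nat_numeral)
  then have "((\<lambda>r. (R^3 - 1) * r^2 + (R^2 - 1) * R^3 * inverse (r^3)) has_real_derivative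
      2 * (R^3 - 1) * r - 3 * (R^2 - 1) * R^3 / r^4) (at r)"
    using assms by (auto intro!: derivative_eq_intros simp: algebra_simps diff_divide_distrib)
  then have "((\<lambda>r. 1 / (R^5 - 1) * ((R^3 - 1) * r^2 + (R^2 - 1) * R^3 * inverse (r^3)))
      has_real_derivative eta' R r) (at r)"
    unfolding eta'_def by (rule DERIV_cmult)
  moreover have "eta R = (\<lambda>r. 1 / (R^5 - 1) * ((R^3 - 1) * r^2 + (R^2 - 1) * R^3 * inverse (r^3)))"
    by (auto simp: eta_def fun_eq_iff power_mult_distrib power_inverse divide_inverse)
  ultimately show ?thesis by simp
qed

lemma eta_flux_has_real_derivative:
  assumes "0 < r"
  shows "((\<lambda>r. r^2 * eta' R r) has_real_derivative 6 * eta R r) (at r)"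
proof -
  have "inverse (r^2) * (2 * r) * inverse (r^2) = 2 / r^3"
    using assms by (simp add: field_simps eval_nat_numeral)
  then have "((\<lambda>r. 2 * (R^3 - 1) * r^3 - 3 * (R^2 - 1) * R^3 * inverse (r^2)) has_real_derivative
      6 * ((R^3 - 1) * r^2 + (R^2 - 1) * (R / r)^3)) (at r)"
    using assms
    by (auto intro!: derivative_eq_intros simp: algebra_simps diff_divide_distrib power_divide)
  from DERIV_cmult[OF this, of "1 / (R^5 - 1)"]
  have "((\<lambda>r. 1 / (R^5 - 1) * (2 * (R^3 - 1) * r^3 - 3 * (R^2 - 1) * R^3 * inverse (r^2)))
      has_real_derivative 6 * eta R r) (at r)"
    by (simp add: eta_def)
  moreover have "r^2 * (c * r - d / r^4) = c * r^3 - d * inverse (r^2)" for c d r :: real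
    by (cases "r = 0") (simp_all add: field_simps eval_nat_numeral)
  then have "(\<lambda>r. r^2 * eta' R r) =
      (\<lambda>r. 1 / (R^5 - 1) * (2 * (R^3 - 1) * r^3 - 3 * (R^2 - 1) * R^3 * inverse (r^2)))"
    unfolding eta'_def mult.left_commute[of "_^2"] by simp
  ultimately show ?thesis by simp
qed

lemma continuous_on_eta': "S \<subseteq> {0<..} \<Longrightarrow> continuous_on S (eta' R)"
  unfolding eta'_def by (intro continuous_intros) auto

lemma weighted_H1_on_eta:
  assumes "0 < a"
  shows "weighted_H1_on a b (eta R) (eta' R)"
proof (rule weighted_H1_on_C1)
  show "continuous_on {a..b} (eta' R)"
    by (rule continuous_on_eta') (use assms in auto)
  show "(eta R has_real_derivative eta' R x) (at x within {a..b})" if "x \<in> {a..b}" for x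
    using assms that by (auto intro!: has_field_derivative_at_within[OF eta_has_real_derivative])
qed

lemma eta_left [simp]: "1 < R \<Longrightarrow> eta R 1 = 1"
  and eta_right [simp]: "1 < R \<Longrightarrow> eta R R = 1"
  using one_less_power[of R 5] by (auto simp: eta_def field_simps eval_nat_numeral)

lemma eta_le_one:
  assumes "1 < R" "1 \<le> r" "r \<le> R"
  shows "eta R r \<le> 1"
proof -
  define c where "c = R^3 - 1"
  have "0 \<le> (r - 1) * (R - r) *
      (c * r^3 + c * (1 + R) * r^2 + R * (R + 1) * (R^2 - 1) * r + (1 + R) * (R^3 - R^2))"
    using assms by (intro mult_nonneg_nonneg add_nonneg_nonneg)
      (auto simp: c_def one_le_power power_increasing)
  also have "\<dots> = (R^5 - 1) * r^3 - c * r^5 - (R^2 - 1) * R^3"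
    unfolding c_def by (simp add: algebra_simps eval_nat_numeral)
  finally have "c * r^5 + (R^2 - 1) * R^3 \<le> (R^5 - 1) * r^3"
    by simp
  moreover have "eta R r = (c * r^5 + (R^2 - 1) * R^3) / ((R^5 - 1) * r^3)"
    using assms unfolding eta_def c_def by (simp add: field_simps eval_nat_numeral)
  moreover have "0 < (R^5 - 1) * r^3"
    using assms one_less_power[of R 5] by simp
  ultimately show ?thesis
    by (simp add: divide_le_eq_1)
qed

lemma eta_first_variation:
  assumes a: "0 < a" and ab: "a \<le> b" and h: "weighted_H1_on a b h g"
    and ends: "h a = eta R a" "h b = eta R b"
  shows "((\<lambda>r. r^2 * eta' R r * (eta' R r - g r) + 6 * eta R r * (eta R r - h r)) has_integral 0) {a..b}"
proof -
  note eta = weighted_H1_on_eta[OF a, of b R]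
  have flux: "((\<lambda>r. r^2 * eta' R r) has_real_derivative 6 * eta R x) (at x within {a..b})"
    if "x \<in> {a..b}" for x
    using a that by (auto intro!: has_field_derivative_at_within[OF eta_flux_has_real_derivative])
  have "continuous_on {a..b} (\<lambda>r. 6 * eta R r)"
    by (intro continuous_intros weighted_H1_on_continuous_on[OF eta])
  note parts = weighted_H1_on_integration_by_parts[OF _ ab this flux]
  have "((\<lambda>r. (r^2 * eta' R r * eta' R r + 6 * eta R r * eta R r)
      - (r^2 * eta' R r * g r + 6 * eta R r * h r)) has_integral 0) {a..b}"
    using has_integral_diff[OF parts[OF eta] parts[OF h]] ends by simp
  then show ?thesis
    by (simp add: algebra_simps)
qed


locale energy_minimizer =
  fixes t R :: real and h g :: "real \<Rightarrow> real"
  assumes t_nonneg: "0 \<le> t" and R_gt_1: "1 < R"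
    and admissible: "admissible R h g"
    and minimal: "\<And>k gk. admissible R k gk \<Longrightarrow> energy t R h g \<le> energy t R k gk"
begin

lemma weighted_H1: "weighted_H1_on 1 R h g"
  and boundary: "h 1 = 1" "h R = 1"
  using admissible unfolding admissible_iff_weighted_H1_on by blast+

lemma continuous: "continuous_on {1..R} h"
  by (rule weighted_H1_on_continuous_on[OF weighted_H1])

lemma local_minimality:
  assumes ab: "1 \<le> a" "a < b" "b \<le> R"
    and p: "weighted_H1_on a b p q" and ends: "p a = h a" "p b = h b"
  shows "integral {a..b} (lagrangian t h g) \<le> integral {a..b} (lagrangian t p q)"
proof -
  define k where "k x = (if x \<in> {a<..<b} then p x else h x)" for x
  define gk where "gk x = (if x \<in> {a<..<b} then q x else g x)" for x
  have k_weighted_H1: "weighted_H1_on 1 R k gk"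
    unfolding k_def gk_def by (rule weighted_H1_on_patch[OF weighted_H1 p ab ends])
  have outside: "k x = h x" "gk x = g x" if "x \<notin> {a<..<b}" for x
    using that by (auto simp: k_def gk_def)
  have inside: "k x = p x" "gk x = q x" if "x \<in> {a<..<b}" for x
    using that by (auto simp: k_def gk_def)
  have split: "integral {1..R} F = integral {1..a} F + integral {a..b} F + integral {b..R} F"
    if "set_integrable lborel {1..R} F" for F :: "real \<Rightarrow> real"
  proof -
    have F: "F integrable_on {1..R}"
      using set_borel_integral_eq_integral(1)[OF that] .
    have "integral {1..a} F + integral {a..b} F = integral {1..b} F"
      using ab by (intro Henstock_Kurzweil_Integration.integral_combine integrable_subinterval_real[OF F]) auto
    moreover have "integral {1..b} F + integral {b..R} F = integral {1..R} F"
      using ab by (intro Henstock_Kurzweil_Integration.integral_combine F) auto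
    ultimately show ?thesis by simp
  qed
  have "admissible R k gk"
    unfolding admissible_iff_weighted_H1_on using k_weighted_H1 boundary outside ab by auto
  then have "integral {1..R} (lagrangian t h g) \<le> integral {1..R} (lagrangian t k gk)"
    using minimal energy_eq_integral_lagrangian admissible by metis
  moreover note split[OF set_integrable_lagrangian[OF weighted_H1, of t]]
    split[OF set_integrable_lagrangian[OF k_weighted_H1, of t]]
  moreover have "integral {1..a} (lagrangian t k gk) = integral {1..a} (lagrangian t h g)"
    "integral {b..R} (lagrangian t k gk) = integral {b..R} (lagrangian t h g)"
    by (auto intro!: integral_cong simp: lagrangian_def outside)
  moreover have "integral {a..b} (lagrangian t k gk) = integral {a..b} (lagrangian t p q)"
    by (rule integral_spike[of "{a, b}"]) (auto simp: lagrangian_def inside)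
  ultimately show ?thesis
    by linarith
qed

lemma no_strictly_better_competitor:
  assumes ab: "1 \<le> a" "a < b" "b \<le> R"
    and p: "weighted_H1_on a b p q" "p a = h a" "p b = h b"
    and D: "(D has_integral 0) {a..b}"
    and w: "continuous_on {a..b} w" "\<And>x. x \<in> {a<..<b} \<Longrightarrow> w x < 0"
    and compare: "\<And>x. x \<in> {a..b} \<Longrightarrow> lagrangian t p q x \<le> lagrangian t h g x + D x + w x"
  shows False
proof -
  have "weighted_H1_on a b h g"
    using weighted_H1_on_subinterval[OF weighted_H1] ab by simp
  then have "lagrangian t h g integrable_on {a..b}" "lagrangian t p q integrable_on {a..b}"
    using set_integrable_lagrangian p(1) set_borel_integral_eq_integral(1) by blast+
  moreover have "w integrable_on {a..b}"
    by (rule integrable_continuous_interval[OF w(1)])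
  ultimately have "((\<lambda>x. lagrangian t h g x + D x + w x) has_integral
      integral {a..b} (lagrangian t h g) + 0 + integral {a..b} w) {a..b}"
    by (intro has_integral_add D integrable_integral)
  then have "integral {a..b} (lagrangian t p q)
      \<le> integral {a..b} (lagrangian t h g) + 0 + integral {a..b} w"
    using compare \<open>lagrangian t p q integrable_on {a..b}\<close>
    by (intro has_integral_le[OF integrable_integral]) auto
  moreover have "integral {a..b} w < integral {a..b} (\<lambda>_. 0)"
    using ab w by (intro integral_less_real) auto
  ultimately show False
    using local_minimality[OF ab p] by simp
qed

lemma nonneg: "r \<in> {1..R} \<Longrightarrow> 0 \<le> h r"
proof (rule ccontr)
  assume r: "r \<in> {1..R}" "\<not> 0 \<le> h r"
  obtain a b where ab: "1 \<le> a" "a < b" "b \<le> R" "h a = 0" "h b = 0"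
    and neg: "\<And>x. x \<in> {a<..<b} \<Longrightarrow> h x < 0"
    by (rule negative_excursion[OF continuous]) (use r boundary in auto)
  have "weighted_H1_on a b (\<lambda>x. - h x) (\<lambda>x. - g x)"
    using ab by (intro weighted_H1_on_uminus weighted_H1_on_subinterval[OF weighted_H1]) auto
  moreover have "continuous_on {a..b} (\<lambda>x. x^2 * hplus t * (h x)^3)"
    using ab by (intro continuous_intros continuous_on_subset[OF continuous]) auto
  moreover have "x^2 * hplus t * (h x)^3 < 0" if "x \<in> {a<..<b}" for x
    using neg[OF that] hplus_ge[OF t_nonneg] ab that
    by (intro mult_pos_neg) (auto simp: power_less_zero_eq)
  ultimately show False
    using ab
    by (intro no_strictly_better_competitor[where p = "\<lambda>x. - h x" and D = "\<lambda>_. 0"])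
      (auto simp: lagrangian_def potential_uminus algebra_simps)
qed

lemma le_one: "r \<in> {1..R} \<Longrightarrow> h r \<le> 1"
proof (rule ccontr)
  assume r: "r \<in> {1..R}" "\<not> h r \<le> 1"
  have "continuous_on {1..R} (\<lambda>x. 1 - h x)"
    by (intro continuous_intros continuous)
  then obtain a b where ab: "1 \<le> a" "a < b" "b \<le> R" "1 - h a = 0" "1 - h b = 0"
    and above: "\<And>x. x \<in> {a<..<b} \<Longrightarrow> 1 - h x < 0"
    by (rule negative_excursion) (use r boundary in auto)
  have "weighted_H1_on a b (\<lambda>_. 1) (\<lambda>_. 0)"
    by (intro weighted_H1_on_C1) auto
  moreover have "continuous_on {a..b} (\<lambda>x. 3 - 3 * (h x)^2)"
    using ab by (intro continuous_intros continuous_on_subset[OF continuous]) auto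
  moreover have "3 - 3 * (h x)^2 < 0" if "x \<in> {a<..<b}" for x
    using above[OF that] by (simp add: one_less_power)
  moreover have "lagrangian t (\<lambda>_. 1) (\<lambda>_. 0) x \<le> lagrangian t h g x + 0 + (3 - 3 * (h x)^2)" for x
    using potential_nonneg[OF t_nonneg, of "h x"] by (simp add: lagrangian_def)
  ultimately show False
    using ab
    by (intro no_strictly_better_competitor[where p = "\<lambda>_. 1" and D = "\<lambda>_. 0"]) auto
qed

lemma eta_le: "r \<in> {1..R} \<Longrightarrow> eta R r \<le> h r"
proof (rule ccontr)
  assume r: "r \<in> {1..R}" "\<not> eta R r \<le> h r"
  have eta_cont: "continuous_on {c..d} (eta R)" if "0 < c" for c d
    by (rule weighted_H1_on_continuous_on[OF weighted_H1_on_eta[OF that]])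
  have "continuous_on {1..R} (\<lambda>x. h x - eta R x)"
    by (intro continuous_intros continuous eta_cont) simp
  then obtain a b where ab: "1 \<le> a" "a < b" "b \<le> R" "h a - eta R a = 0" "h b - eta R b = 0"
    and below: "\<And>x. x \<in> {a<..<b} \<Longrightarrow> h x - eta R x < 0"
    by (rule negative_excursion) (use r boundary R_gt_1 in auto)
  have h: "weighted_H1_on a b h g"
    using ab by (intro weighted_H1_on_subinterval[OF weighted_H1]) auto
  show False
  proof (rule no_strictly_better_competitor[OF ab(1-3) weighted_H1_on_eta])
    show "((\<lambda>r. r^2 * eta' R r * (eta' R r - g r) + 6 * eta R r * (eta R r - h r)) has_integral 0) {a..b}"
      using ab by (intro eta_first_variation h) auto
    show "continuous_on {a..b} (\<lambda>x. x^2 * (potential t (eta R x) - potential t (h x)))"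
      unfolding potential_def using ab
      by (intro continuous_intros eta_cont continuous_on_subset[OF continuous]) auto
    show "x^2 * (potential t (eta R x) - potential t (h x)) < 0" if x: "x \<in> {a<..<b}" for x
    proof -
      have "potential t (eta R x) < potential t (h x)"
        using x ab below[OF x] R_gt_1
        by (intro potential_strict_antimono t_nonneg nonneg eta_le_one) auto
      then show ?thesis
        using x ab by (simp add: mult_pos_neg)
    qed
    show "lagrangian t (eta R) (eta' R) x \<le> lagrangian t h g x
        + (x^2 * eta' R x * (eta' R x - g x) + 6 * eta R x * (eta R x - h x))
        + x^2 * (potential t (eta R x) - potential t (h x))" for x
      by (rule lagrangian_le_tangent)
  qed (use ab in simp_all)
qed

end

theorem proposition3p2:
  fixes t Rstar R :: real and h :: "real \<Rightarrow> real"
  assumes "t \<ge> 0"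
    and "Rstar > 1"
    and "\<forall>R'\<in>{1<..Rstar}. \<forall>r\<in>{1..R'}. eta R' r \<ge> 2/3"
    and "1 < R" and "R \<le> Rstar"
    and "is_minimizer t R h"
  shows "\<forall>r\<in>{1..R}. 2/3 \<le> eta R r \<and> eta R r \<le> h r \<and> h r \<le> 1"
proof -
  obtain g where "energy_minimizer t R h g"
    using assms(1,4,6) unfolding is_minimizer_def energy_minimizer_def by blast
  then interpret energy_minimizer t R h g .
  show ?thesis
  proof
    fix r assume r: "r \<in> {1..R}"
    have "2/3 \<le> eta R r"
      using assms(3-5) r by simp
    then show "2/3 \<le> eta R r \<and> eta R r \<le> h r \<and> h r \<le> 1"
      using eta_le[OF r] le_one[OF r] by simp
  qed
qed

end
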